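(* Assume (A1)–(A4). For the noisy ADMM iterates, let $E_k^\delta=\rho_1\|Ax_k^\delta-b^\delta\|^2+\rho_2\|Wx_k^\delta-y_k^\delta\|^2+\rho_2\|y_k^\delta-y_{k-1}^\delta\|^2$ for $k\ge1$. Then for all $k\ge1$ $$E_{k+1}^\delta-E_k^\delta\le-\rho_1\|A(x_{k+1}^\delta-x_k^\delta)\|^2-4c_0\|y_{k+1}^\delta-y_k^\delta\|^2.$$ Consequently $\{E_k^\delta\}$ is monotonically nonincreasing, and for all integers $1\le m<n$, $$\sum_{k=m}^{n-1}\|y_{k+1}^\delta-y_k^\delta\|^2\le\frac{1}{4c_0}E_m^\delta,\qquad (n-m)\rho_2\|y_n^\delta-y_{n-1}^\delta\|^2\le\sum_{k=m+1}^nE_k^\delta.$$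
   Context: $\mathcal X,\mathcal Y,\mathcal H$ are real Hilbert spaces. Standing assumptions: (A1) $A:\mathcal X\to\mathcal H$ is bounded linear. (A2) $f:\mathcal Y\to(-\infty,\infty]$ is proper, lower semicontinuous and strongly convex with constant $c_0>0$: $f(ty_1+(1-t)y_2)+c_0t(1-t)\|y_1-y_2\|^2\le tf(y_1)+(1-t)f(y_2)$ for all $y_1,y_2$, $t\in[0,1]$. (A3) $W:\mathscr D(W)\subset\mathcal X\to\mathcal Y$ is a densely defined closed linear operator. (A4) There is $c_1>0$ with $\|Ax\|^2+\|Wx\|^2\ge c_1\|x\|^2$ for all $x\in\mathscr D(W)$. Noisy ADMM: given $b^\delta\in\mathcal H$, fix $\rho_1,\rho_2>0$ and initial $y_0^\delta\in\mathcal Y$, $\lambda_0^\delta\in\mathcal H$, $\mu_0^\delta\in\mathcal Y$. For $k=0,1,\dots$: $x_{k+1}^\delta=\arg\min_{x\in\mathscr D(W)}\{\langle\lambda_k^\delta,Ax\rangle+\langle\mu_k^\delta,Wx\rangle+\frac{\rho_1}{2}\|Ax-b^\delta\|^2+\frac{\rho_2}{2}\|Wx-y_k^\delta\|^2\}$, $y_{k+1}^\delta=\arg\min_{y\in\mathcal Y}\{f(y)-\langle\mu_k^\delta,y\rangle+\frac{\rho_2}{2}\|Wx_{k+1}^\delta-y\|^2\}$, $\lambda_{k+1}^\delta=\lambda_k^\delta+\rho_1(Ax_{k+1}^\delta-b^\delta)$, $\mu_{k+1}^\delta=\mu_k^\delta+\rho_2(Wx_{k+1}^\delta-y_{k+1}^\delta)$.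 (These minimizers exist and are unique.) *)

theory Defs
  imports "HOL-Analysis.Analysis"
begin

definition proper_fun :: "('b \<Rightarrow> ereal) \<Rightarrow> bool" where
  "proper_fun f \<longleftrightarrow> (\<forall>y. f y \<noteq> -\<infinity>) \<and> (\<exists>y. f y \<noteq> \<infinity>)"

definition lsc_fun :: "('b::topological_space \<Rightarrow> ereal) \<Rightarrow> bool" where
  "lsc_fun f \<longleftrightarrow> (\<forall>c::ereal. closed {y. f y \<le> c})"

definition strongly_convex_with :: "('b::real_normed_vector \<Rightarrow> ereal) \<Rightarrow> real \<Rightarrow> bool" where
  "strongly_convex_with f c0 \<longleftrightarrow>
     (\<forall>y1 y2 t. 0 \<le> t \<and> t \<le> 1 \<longrightarrow>
        f (t *\<^sub>R y1 + (1 - t) *\<^sub>R y2) + ereal (c0 * t * (1 - t) * (norm (y1 - y2))\<^sup>2)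
          \<le> ereal t * f y1 + ereal (1 - t) * f y2)"

definition densely_defined_closed_linear ::
  "'a::real_normed_vector set \<Rightarrow> ('a \<Rightarrow> 'b::real_normed_vector) \<Rightarrow> bool" where
  "densely_defined_closed_linear D W \<longleftrightarrow>
     subspace D \<and>
     (\<forall>x\<in>D. \<forall>z\<in>D. W (x + z) = W x + W z) \<and>
     (\<forall>x\<in>D. \<forall>c::real. W (c *\<^sub>R x) = c *\<^sub>R W x) \<and>
     closure D = UNIV \<and>
     closed {(x, W x) | x. x \<in> D}"

text \<open>The energy \<open>E_k\<close> (used for \<open>k \<ge> 1\<close>).\<close>

definition admm_E ::
  "('a \<Rightarrow> 'h::real_normed_vector) \<Rightarrow> ('a \<Rightarrow> 'b::real_normed_vector) \<Rightarrow> 'h \<Rightarrow> real \<Rightarrow> real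
    \<Rightarrow> (nat \<Rightarrow> 'a) \<Rightarrow> (nat \<Rightarrow> 'b) \<Rightarrow> nat \<Rightarrow> real" where
  "admm_E A W b \<rho>1 \<rho>2 x y k =
     \<rho>1 * (norm (A (x k) - b))\<^sup>2 + \<rho>2 * (norm (W (x k) - y k))\<^sup>2
     + \<rho>2 * (norm (y k - y (k - 1)))\<^sup>2"

end

theory Submission
  imports Defs
begin

text \<open>
  The \<open>x\<close>-update minimises a quadratic over the subspace \<open>D\<close>, so its first-order condition
  says that \<open>\<lambda>\<^sub>k\<^sub>+\<^sub>1\<close> and \<open>\<mu>\<^sub>k + \<rho>\<^sub>2(Wx\<^sub>k\<^sub>+\<^sub>1 - y\<^sub>k)\<close> annihilate \<open>(Ah, Wh)\<close> for every \<open>h \<in> D\<close>.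
  The \<open>y\<close>-update is a proximal step of the strongly convex \<open>f\<close>, so \<open>\<mu>\<^sub>k\<^sub>+\<^sub>1\<close> is a subgradient of
  \<open>f\<close> at \<open>y\<^sub>k\<^sub>+\<^sub>1\<close> with a quadratic margin \<open>c\<^sub>0\<close>; two consecutive such inequalities make the
  increments of \<open>y\<close> strongly monotone.  Subtracting the first-order conditions of steps \<open>k\<close> and
  \<open>k - 1\<close>, testing with \<open>h = x\<^sub>k\<^sub>+\<^sub>1 - x\<^sub>k\<close> and expanding the squares with the polarisation identity
  yields the decrease of \<open>E\<^sub>k\<close>.  The two sum bounds then follow by telescoping and by monotonicity.
\<close>

lemma power2_norm_add_scaleR:
  fixes u v :: "'a::real_inner"
  shows "(norm (u + t *\<^sub>R v))\<^sup>2 = (norm u)\<^sup>2 + 2 * t * inner u v + t\<^sup>2 * (norm v)\<^sup>2"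
  unfolding power2_norm_eq_inner
  by (simp add: inner_add_left inner_add_right inner_commute power2_eq_square algebra_simps)

lemma linear_coeff_zero_if_quadratic_nonneg:
  fixes L Q :: real
  assumes "\<And>t. 0 \<le> t * L + t\<^sup>2 * Q"
  shows "L = 0"
proof (rule ccontr)
  assume "L \<noteq> 0"
  define d where "d = 2 * \<bar>Q\<bar> + 1"
  have d: "d > 0" "Q \<le> d / 2" by (auto simp: d_def)
  define t where "t = - L / d"
  have "0 \<le> t * L + t\<^sup>2 * Q" using assms by blast
  also have "\<dots> \<le> t * L + t\<^sup>2 * (d / 2)" using d(2) by (intro add_left_mono mult_left_mono) auto
  also have "\<dots> = - L\<^sup>2 / (2 * d)" using d by (simp add: t_def field_simps power2_eq_square)
  also have "\<dots> < 0" using d \<open>L \<noteq> 0\<close> by simp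
  finally show False by simp
qed

lemma nonneg_if_small_perturbations_nonneg:
  fixes G K :: real
  assumes "\<And>t. 0 < t \<Longrightarrow> t \<le> 1 \<Longrightarrow> 0 \<le> G + t * K" and "0 \<le> K"
  shows "0 \<le> G"
proof (rule ccontr)
  assume "\<not> 0 \<le> G"
  define t where "t = min 1 (- G / (2 * K + 1))"
  have "G / (2 * K + 1) < 0" using \<open>\<not> 0 \<le> G\<close> assms(2) by (simp add: divide_neg_pos)
  hence t: "0 < t" "t \<le> 1" "t \<le> - G / (2 * K + 1)" by (auto simp: t_def)
  have "t * K \<le> (- G / (2 * K + 1)) * K" using t assms(2) by (intro mult_right_mono) auto
  also have "\<dots> = - G * (K / (2 * K + 1))" by simp
  also have "\<dots> < - G * 1"
    using \<open>\<not> 0 \<le> G\<close> assms(2) by (intro mult_strict_left_mono) auto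
  finally have "G + t * K < 0" by simp
  with assms(1)[OF t(1,2)] show False by simp
qed

lemma quadratic_minimizer_on_subspace_stationary:
  fixes A :: "'x::real_vector \<Rightarrow> 'h::real_inner" and W :: "'x \<Rightarrow> 'y::real_inner"
  assumes "linear A" and "subspace D"
    and W_add: "\<And>u v. u \<in> D \<Longrightarrow> v \<in> D \<Longrightarrow> W (u + v) = W u + W v"
    and W_scale: "\<And>u c. u \<in> D \<Longrightarrow> W (c *\<^sub>R u) = c *\<^sub>R W u"
    and u: "u \<in> D" and h: "h \<in> D"
    and min: "\<And>z. z \<in> D \<Longrightarrow>
      inner l (A u) + inner m (W u) + \<rho>1 / 2 * (norm (A u - b))\<^sup>2 + \<rho>2 / 2 * (norm (W u - c))\<^sup>2
      \<le> inner l (A z) + inner m (W z) + \<rho>1 / 2 * (norm (A z - b))\<^sup>2 + \<rho>2 / 2 * (norm (W z - c))\<^sup>2"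
  shows "inner (l + \<rho>1 *\<^sub>R (A u - b)) (A h) + inner (m + \<rho>2 *\<^sub>R (W u - c)) (W h) = 0"
proof -
  define L where "L = inner l (A h) + inner m (W h)
    + \<rho>1 * inner (A u - b) (A h) + \<rho>2 * inner (W u - c) (W h)"
  define Q where "Q = \<rho>1 / 2 * (norm (A h))\<^sup>2 + \<rho>2 / 2 * (norm (W h))\<^sup>2"
  have "0 \<le> t * L + t\<^sup>2 * Q" for t
  proof -
    have "u + t *\<^sub>R h \<in> D" using assms(2) u h by (simp add: subspace_add subspace_scale)
    moreover have "A (u + t *\<^sub>R h) - b = (A u - b) + t *\<^sub>R A h"
      using \<open>linear A\<close> by (simp add: linear_add linear_scale algebra_simps)
    moreover have "W (u + t *\<^sub>R h) - c = (W u - c) + t *\<^sub>R W h"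
      using assms(2) u h by (simp add: W_add W_scale subspace_scale algebra_simps)
    ultimately show ?thesis
      using min[of "u + t *\<^sub>R h"]
      by (simp only: power2_norm_add_scaleR) (simp add: L_def Q_def inner_add_right algebra_simps)
  qed
  then have "L = 0" by (rule linear_coeff_zero_if_quadratic_nonneg)
  then show ?thesis by (simp add: L_def inner_add_left algebra_simps)
qed

lemma proper_prox_value_finite:
  assumes "proper_fun f" and "\<And>v. f p + ereal (g p) \<le> f v + ereal (g v)"
  obtains r where "f p = ereal r"
proof -
  obtain v where "f v \<noteq> \<infinity>" using assms(1) unfolding proper_fun_def by auto
  then have "f p \<noteq> \<infinity>" using assms(2)[of v] by auto
  moreover have "f p \<noteq> - \<infinity>" using assms(1) unfolding proper_fun_def by auto
  ultimately show ?thesis using that by (cases "f p") auto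
qed

text \<open>Optimality of the proximal point \<open>p\<close> combined with strong convexity along the segment
  from \<open>p\<close> to \<open>v\<close>: the two inequalities differ by \<open>t\<close> times a quantity that tends to the claim
  as \<open>t \<rightarrow> 0\<close>.\<close>

lemma strongly_convex_prox_subgradient:
  fixes f :: "'a::real_inner \<Rightarrow> ereal"
  assumes "proper_fun f" "strongly_convex_with f c" "0 \<le> c" "0 \<le> \<rho>"
    and min: "\<And>v. f p + ereal (- inner \<mu> p + \<rho> / 2 * (norm (z - p))\<^sup>2)
                  \<le> f v + ereal (- inner \<mu> v + \<rho> / 2 * (norm (z - v))\<^sup>2)"
    and fp: "f p = ereal r"
  shows "ereal (r + inner (\<mu> + \<rho> *\<^sub>R (z - p)) (v - p) + c * (norm (v - p))\<^sup>2) \<le> f v"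
proof (cases "f v")
  case (real fv)
  define N where "N = (norm (v - p))\<^sup>2"
  define G where "G = fv - r - inner (\<mu> + \<rho> *\<^sub>R (z - p)) (v - p) - c * N"
  have "0 \<le> G + t * ((c + \<rho> / 2) * N)" if t: "0 < t" "t \<le> 1" for t
  proof -
    define w where "w = t *\<^sub>R v + (1 - t) *\<^sub>R p"
    have "f w + ereal (c * t * (1 - t) * N) \<le> ereal (t * fv + (1 - t) * r)"
      using assms(2)[unfolded strongly_convex_with_def, rule_format, of t v p] t
      by (simp add: w_def N_def real fp)
    moreover have "f w \<noteq> - \<infinity>" using assms(1) unfolding proper_fun_def by auto
    ultimately obtain fw where fw: "f w = ereal fw"
      and convex: "fw + c * t * (1 - t) * N \<le> t * fv + (1 - t) * r"
      by (cases "f w") auto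
    have prox: "r - inner \<mu> p + \<rho> / 2 * (norm (z - p))\<^sup>2 \<le> fw - inner \<mu> w + \<rho> / 2 * (norm (z - w))\<^sup>2"
      using min[of w] fp fw by simp
    have norm_zw: "(norm (z - w))\<^sup>2 = (norm (z - p))\<^sup>2 - 2 * t * inner (z - p) (v - p) + t\<^sup>2 * N"
    proof -
      have "z - w = (z - p) + (- t) *\<^sub>R (v - p)" by (simp add: w_def algebra_simps)
      then show ?thesis unfolding N_def by (simp only: power2_norm_add_scaleR) simp
    qed
    have inner_w: "inner \<mu> w = inner \<mu> p + t * inner \<mu> (v - p)"
      by (simp add: w_def inner_add_right inner_diff_right algebra_simps)
    have "0 \<le> t * (G + t * ((c + \<rho> / 2) * N))"
      using convex prox unfolding norm_zw inner_w G_def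
      by (simp add: inner_add_left algebra_simps power2_eq_square)
    with t show ?thesis by (simp add: zero_le_mult_iff)
  qed
  moreover have "0 \<le> (c + \<rho> / 2) * N" using assms(3,4) by (simp add: N_def)
  ultimately have "0 \<le> G" by (rule nonneg_if_small_perturbations_nonneg)
  then show ?thesis by (simp add: real G_def N_def)
next
  case MInf
  then show ?thesis using assms(1) unfolding proper_fun_def by auto
qed simp

lemma strongly_monotone_if_strong_subgradients:
  fixes p q g h :: "'a::real_inner"
  assumes "fp + inner g (q - p) + c * (norm (q - p))\<^sup>2 \<le> fq"
    and "fq + inner h (p - q) + c * (norm (p - q))\<^sup>2 \<le> fp"
  shows "2 * c * (norm (q - p))\<^sup>2 \<le> inner (h - g) (q - p)"
  using assms by (simp add: norm_minus_commute inner_diff_left inner_diff_right)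

text \<open>Here \<open>r1, r0\<close> are the residuals \<open>Ax\<^sub>k\<^sub>+\<^sub>1 - b, Ax\<^sub>k - b\<close>; \<open>a, a0\<close> the residuals
  \<open>Wx\<^sub>k\<^sub>+\<^sub>1 - y\<^sub>k\<^sub>+\<^sub>1, Wx\<^sub>k - y\<^sub>k\<close>; and \<open>c, e\<close> the increments \<open>y\<^sub>k\<^sub>+\<^sub>1 - y\<^sub>k, y\<^sub>k - y\<^sub>k\<^sub>-\<^sub>1\<close>.\<close>

lemma admm_energy_algebra:
  fixes r1 r0 :: "'h::real_inner" and a a0 c e :: "'y::real_inner"
  assumes orth: "\<rho>1 * inner r1 (r1 - r0) + \<rho>2 * inner (a + c - e) (a - a0 + c) = 0"
    and mono: "2 * c0 * (norm c)\<^sup>2 \<le> \<rho>2 * inner a c" and "0 < \<rho>2"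
  shows "\<rho>1 * (norm r1)\<^sup>2 + \<rho>2 * (norm a)\<^sup>2 + \<rho>2 * (norm c)\<^sup>2
           - (\<rho>1 * (norm r0)\<^sup>2 + \<rho>2 * (norm a0)\<^sup>2 + \<rho>2 * (norm e)\<^sup>2)
         \<le> - \<rho>1 * (norm (r1 - r0))\<^sup>2 - 4 * c0 * (norm c)\<^sup>2"
proof -
  have "\<rho>1 * (2 * inner r1 (r1 - r0)) = \<rho>1 * ((norm r1)\<^sup>2 - (norm r0)\<^sup>2 + (norm (r1 - r0))\<^sup>2)"
    unfolding power2_norm_eq_inner by (simp add: inner_diff_left inner_diff_right inner_commute)
  moreover have "\<rho>2 * (2 * inner (a + c - e) (a - a0 + c))
      = \<rho>2 * ((norm a)\<^sup>2 - (norm a0)\<^sup>2 + (norm c)\<^sup>2 - (norm e)\<^sup>2 + (norm (a - a0 + c - e))\<^sup>2 + 2 * inner a c)"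
    unfolding power2_norm_eq_inner
    by (simp add: inner_diff_left inner_diff_right inner_add_left inner_add_right inner_commute)
  moreover have "0 \<le> \<rho>2 * (norm (a - a0 + c - e))\<^sup>2" using \<open>0 < \<rho>2\<close> by simp
  ultimately show ?thesis using orth mono unfolding ring_distribs by linarith
qed

lemma sum_le_diff_if_decreasing:
  fixes E d :: "nat \<Rightarrow> real"
  assumes "\<And>k. m \<le> k \<Longrightarrow> E (Suc k) + d k \<le> E k" and "m \<le> n"
  shows "(\<Sum>k=m..<n. d k) \<le> E m - E n"
  using assms(2)
proof (induction n rule: dec_induct)
  case (step n)
  then show ?case using assms(1)[of n] by simp
qed simp

lemma le_if_decreasing_from:
  fixes E :: "nat \<Rightarrow> real"
  assumes "\<And>k. m \<le> k \<Longrightarrow> E (Suc k) \<le> E k" and "m \<le> k" and "k \<le> n"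
  shows "E n \<le> E k"
  using assms(3)
proof (induction n rule: dec_induct)
  case (step n)
  then show ?case using assms(1)[of n] assms(2) by simp
qed simp

locale noisy_admm =
  fixes A :: "'x::real_vector \<Rightarrow> 'h::real_inner"
    and W :: "'x \<Rightarrow> 'y::real_inner"
    and D :: "'x set"
    and f :: "'y \<Rightarrow> ereal"
    and c0 \<rho>1 \<rho>2 :: real
    and b :: 'h
    and x :: "nat \<Rightarrow> 'x" and y :: "nat \<Rightarrow> 'y"
    and lam :: "nat \<Rightarrow> 'h" and \<mu> :: "nat \<Rightarrow> 'y"
  assumes A_linear: "linear A"
    and f_proper: "proper_fun f"
    and f_strongly_convex: "strongly_convex_with f c0"
    and c0_pos: "0 < c0"
    and D_subspace: "subspace D"
    and W_add: "\<And>u v. u \<in> D \<Longrightarrow> v \<in> D \<Longrightarrow> W (u + v) = W u + W v"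
    and W_scale: "\<And>u c. u \<in> D \<Longrightarrow> W (c *\<^sub>R u) = c *\<^sub>R W u"
    and \<rho>1_pos: "0 < \<rho>1" and \<rho>2_pos: "0 < \<rho>2"
    and xstep: "\<And>k. x (Suc k) \<in> D \<and>
       (\<forall>z\<in>D. inner (lam k) (A (x (Suc k))) + inner (\<mu> k) (W (x (Suc k)))
                + \<rho>1 / 2 * (norm (A (x (Suc k)) - b))\<^sup>2
                + \<rho>2 / 2 * (norm (W (x (Suc k)) - y k))\<^sup>2
             \<le> inner (lam k) (A z) + inner (\<mu> k) (W z)
                + \<rho>1 / 2 * (norm (A z - b))\<^sup>2
                + \<rho>2 / 2 * (norm (W z - y k))\<^sup>2)"
    and ystep: "\<And>k v. f (y (Suc k))
                 + ereal (- inner (\<mu> k) (y (Suc k)) + \<rho>2 / 2 * (norm (W (x (Suc k)) - y (Suc k)))\<^sup>2)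
               \<le> f v + ereal (- inner (\<mu> k) v + \<rho>2 / 2 * (norm (W (x (Suc k)) - v))\<^sup>2)"
    and lstep: "\<And>k. lam (Suc k) = lam k + \<rho>1 *\<^sub>R (A (x (Suc k)) - b)"
    and mstep: "\<And>k. \<mu> (Suc k) = \<mu> k + \<rho>2 *\<^sub>R (W (x (Suc k)) - y (Suc k))"
begin

abbreviation energy :: "nat \<Rightarrow> real" where
  "energy \<equiv> admm_E A W b \<rho>1 \<rho>2 x y"

lemma x_in_D: "x (Suc k) \<in> D"
  using xstep by blast

lemma W_diff: "u \<in> D \<Longrightarrow> v \<in> D \<Longrightarrow> W (u - v) = W u - W v"
  using W_add[of u "- v"] W_scale[of v "- 1"] subspace_neg[OF D_subspace, of v] by simp

lemma x_stationary:
  assumes "h \<in> D"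
  shows "inner (lam (Suc k)) (A h) + inner (\<mu> k + \<rho>2 *\<^sub>R (W (x (Suc k)) - y k)) (W h) = 0"
proof -
  have "inner (lam k + \<rho>1 *\<^sub>R (A (x (Suc k)) - b)) (A h)
      + inner (\<mu> k + \<rho>2 *\<^sub>R (W (x (Suc k)) - y k)) (W h) = 0"
    by (rule quadratic_minimizer_on_subspace_stationary[OF A_linear D_subspace W_add W_scale x_in_D assms])
      (use xstep[of k] in auto)
  then show ?thesis by (simp add: lstep)
qed

lemma y_finite:
  obtains r where "f (y (Suc k)) = ereal r"
  by (rule proper_prox_value_finite[OF f_proper,
        where g = "\<lambda>v. - inner (\<mu> k) v + \<rho>2 / 2 * (norm (W (x (Suc k)) - v))\<^sup>2"])
    (use ystep in auto)

lemma y_subgradient: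
  assumes "f (y (Suc k)) = ereal r"
  shows "ereal (r + inner (\<mu> (Suc k)) (v - y (Suc k)) + c0 * (norm (v - y (Suc k)))\<^sup>2) \<le> f v"
  using strongly_convex_prox_subgradient[OF f_proper f_strongly_convex _ _ ystep assms]
    c0_pos \<rho>2_pos
  by (simp add: mstep)

lemma y_increment_monotone:
  assumes "1 \<le> k"
  shows "2 * c0 * (norm (y (Suc k) - y k))\<^sup>2
    \<le> \<rho>2 * inner (W (x (Suc k)) - y (Suc k)) (y (Suc k) - y k)"
proof -
  obtain j where k: "k = Suc j" using assms by (cases k) auto
  obtain r where r: "f (y k) = ereal r" unfolding k by (rule y_finite)
  obtain s where s: "f (y (Suc k)) = ereal s" by (rule y_finite)
  have "2 * c0 * (norm (y (Suc k) - y k))\<^sup>2 \<le> inner (\<mu> (Suc k) - \<mu> k) (y (Suc k) - y k)"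
    by (rule strongly_monotone_if_strong_subgradients[where fp = r and fq = s])
      (use y_subgradient[OF r[unfolded k], folded k, of "y (Suc k)"] y_subgradient[OF s, of "y k"]
        in \<open>simp_all add: r s\<close>)
  then show ?thesis by (simp add: mstep)
qed

lemma energy_decrease:
  assumes "1 \<le> k"
  shows "energy (Suc k) - energy k
    \<le> - \<rho>1 * (norm (A (x (Suc k) - x k)))\<^sup>2 - 4 * c0 * (norm (y (Suc k) - y k))\<^sup>2"
proof -
  obtain j where k: "k = Suc j" using assms by (cases k) auto
  define h where "h = x (Suc k) - x k"
  define r1 where "r1 = A (x (Suc k)) - b"
  define r0 where "r0 = A (x k) - b"
  define a where "a = W (x (Suc k)) - y (Suc k)"
  define a0 where "a0 = W (x k) - y k"
  define c where "c = y (Suc k) - y k"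
  define e where "e = y k - y j"
  have h: "h \<in> D" using x_in_D[of k] x_in_D[of j] D_subspace unfolding h_def k by (simp add: subspace_diff)
  have Ah: "A h = r1 - r0" unfolding h_def r1_def r0_def by (simp add: linear_diff[OF A_linear])
  have Wh: "W h = a - a0 + c" unfolding h_def a_def a0_def c_def k by (simp add: W_diff x_in_D)
  have "\<mu> k + \<rho>2 *\<^sub>R (W (x (Suc k)) - y k) = (\<mu> j + \<rho>2 *\<^sub>R (W (x k) - y j)) + \<rho>2 *\<^sub>R (a + c - e)"
    unfolding k mstep a_def c_def e_def by (simp add: algebra_simps)
  then have "\<rho>1 * inner r1 (r1 - r0) + \<rho>2 * inner (a + c - e) (a - a0 + c) = 0"
    using x_stationary[OF h, of k] x_stationary[OF h, of j]
    unfolding lstep Ah Wh k[symmetric] r1_def[symmetric] by (simp add: inner_add_left)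
  from admm_energy_algebra[OF this y_increment_monotone[OF assms, folded a_def c_def] \<rho>2_pos]
  show ?thesis unfolding admm_E_def Ah[unfolded h_def]
    by (simp add: r1_def r0_def a_def a0_def c_def e_def k)
qed

lemma energy_nonneg: "0 \<le> energy k"
  using \<rho>1_pos \<rho>2_pos by (simp add: admm_E_def)

lemma energy_decrease_by_y_increment:
  assumes "1 \<le> k"
  shows "energy (Suc k) + 4 * c0 * (norm (y (Suc k) - y k))\<^sup>2 \<le> energy k"
proof -
  have "0 \<le> \<rho>1 * (norm (A (x (Suc k) - x k)))\<^sup>2" using \<rho>1_pos by simp
  then show ?thesis using energy_decrease[OF assms] by linarith
qed

lemma energy_antimono:
  assumes "1 \<le> k"
  shows "energy (Suc k) \<le> energy k"
proof -
  have "0 \<le> 4 * c0 * (norm (y (Suc k) - y k))\<^sup>2" using c0_pos by simp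
  then show ?thesis using energy_decrease_by_y_increment[OF assms] by linarith
qed

lemma sum_increments_le_energy:
  assumes "1 \<le> m" and "m < n"
  shows "(\<Sum>k=m..n-1. (norm (y (Suc k) - y k))\<^sup>2) \<le> energy m / (4 * c0)"
proof -
  have "(\<Sum>k=m..<n. 4 * c0 * (norm (y (Suc k) - y k))\<^sup>2) \<le> energy m - energy n"
    by (rule sum_le_diff_if_decreasing) (use energy_decrease_by_y_increment assms in auto)
  then have "(\<Sum>k=m..<n. (norm (y (Suc k) - y k))\<^sup>2) * (4 * c0) \<le> energy m"
    using energy_nonneg[of n] by (simp add: sum_distrib_left mult.commute)
  moreover have "{m..n-1} = {m..<n}" using assms by auto
  ultimately show ?thesis using c0_pos by (simp add: pos_le_divide_eq)
qed

lemma last_increment_le_sum_energy: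
  assumes "1 \<le> m" and "m < n"
  shows "real (n - m) * \<rho>2 * (norm (y n - y (n - 1)))\<^sup>2 \<le> (\<Sum>k=m+1..n. energy k)"
proof -
  have "\<rho>2 * (norm (y n - y (n - 1)))\<^sup>2 \<le> energy k" if "k \<in> {m+1..n}" for k
  proof -
    have "\<rho>2 * (norm (y n - y (n - 1)))\<^sup>2 \<le> energy n" using \<rho>1_pos \<rho>2_pos by (simp add: admm_E_def)
    also have "\<dots> \<le> energy k"
      by (rule le_if_decreasing_from[where m = 1]) (use energy_antimono that assms in auto)
    finally show ?thesis .
  qed
  then have "(\<Sum>k=m+1..n. \<rho>2 * (norm (y n - y (n - 1)))\<^sup>2) \<le> (\<Sum>k=m+1..n. energy k)"
    by (rule sum_mono)
  then show ?thesis by (simp add: mult.assoc)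
qed

end

text \<open>Assumption (A4) and the lower semicontinuity of \<open>f\<close> only serve to make the iterates
  well defined; given the iterates, the estimates do not need them.\<close>

theorem lemma2p9:
  fixes A :: "'x::{real_inner,complete_space} \<Rightarrow> 'h::{real_inner,complete_space}"
    and W :: "'x \<Rightarrow> 'y::{real_inner,complete_space}"
    and D :: "'x set"
    and f :: "'y \<Rightarrow> ereal"
    and c0 c1 \<rho>1 \<rho>2 :: real
    and b :: 'h
    and x :: "nat \<Rightarrow> 'x" and y :: "nat \<Rightarrow> 'y"
    and lam :: "nat \<Rightarrow> 'h" and \<mu> :: "nat \<Rightarrow> 'y"
  assumes A1: "bounded_linear A"
    and A2: "proper_fun f" "lsc_fun f" "c0 > 0" "strongly_convex_with f c0"
    and A3: "densely_defined_closed_linear D W"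
    and A4: "c1 > 0" "\<forall>z\<in>D. (norm (A z))\<^sup>2 + (norm (W z))\<^sup>2 \<ge> c1 * (norm z)\<^sup>2"
    and rho: "\<rho>1 > 0" "\<rho>2 > 0"
    and xstep: "\<And>k. x (Suc k) \<in> D \<and>
       (\<forall>z\<in>D. inner (lam k) (A (x (Suc k))) + inner (\<mu> k) (W (x (Suc k)))
                + \<rho>1 / 2 * (norm (A (x (Suc k)) - b))\<^sup>2
                + \<rho>2 / 2 * (norm (W (x (Suc k)) - y k))\<^sup>2
             \<le> inner (lam k) (A z) + inner (\<mu> k) (W z)
                + \<rho>1 / 2 * (norm (A z - b))\<^sup>2
                + \<rho>2 / 2 * (norm (W z - y k))\<^sup>2)"
    and ystep: "\<And>k v. f (y (Suc k))
                 + ereal (- inner (\<mu> k) (y (Suc k)) + \<rho>2 / 2 * (norm (W (x (Suc k)) - y (Suc k)))\<^sup>2)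
               \<le> f v + ereal (- inner (\<mu> k) v + \<rho>2 / 2 * (norm (W (x (Suc k)) - v))\<^sup>2)"
    and lstep: "\<And>k. lam (Suc k) = lam k + \<rho>1 *\<^sub>R (A (x (Suc k)) - b)"
    and mstep: "\<And>k. \<mu> (Suc k) = \<mu> k + \<rho>2 *\<^sub>R (W (x (Suc k)) - y (Suc k))"
  shows "(\<forall>k\<ge>1. admm_E A W b \<rho>1 \<rho>2 x y (Suc k) - admm_E A W b \<rho>1 \<rho>2 x y k
              \<le> - \<rho>1 * (norm (A (x (Suc k) - x k)))\<^sup>2 - 4 * c0 * (norm (y (Suc k) - y k))\<^sup>2)
       \<and> (\<forall>k\<ge>1. admm_E A W b \<rho>1 \<rho>2 x y (Suc k) \<le> admm_E A W b \<rho>1 \<rho>2 x y k)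
       \<and> (\<forall>m n. 1 \<le> m \<and> m < n \<longrightarrow>
            (\<Sum>k=m..n-1. (norm (y (Suc k) - y k))\<^sup>2) \<le> admm_E A W b \<rho>1 \<rho>2 x y m / (4 * c0)
          \<and> real (n - m) * \<rho>2 * (norm (y n - y (n - 1)))\<^sup>2
              \<le> (\<Sum>k=m+1..n. admm_E A W b \<rho>1 \<rho>2 x y k))"
proof -
  interpret noisy_admm A W D f c0 \<rho>1 \<rho>2 b x y lam \<mu>
    by (rule noisy_admm.intro)
      (use bounded_linear.linear[OF A1] A2 A3 rho xstep ystep lstep mstep
        in \<open>auto simp: densely_defined_closed_linear_def\<close>)
  show ?thesis
    using energy_decrease energy_antimono sum_increments_le_energy last_increment_le_sum_energy
    by blast
qed

end
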